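(* Let $A$ be a finite additive poset, let $\mu:A\times A\to\mathbb{Z}$ be the Möbius function of its partial order, and let $\mathcal{A}\subset A$ be the set of atoms of $A$. Then every $a\in A$ satisfies $a=\sum_{b\in\mathcal{A}}\mu(b,a)\,b$ (integer coefficients acting on the $\mathbb{Z}/2\mathbb{Z}$-vector space $A$).
   Context: An additive poset is a pair $(A,\le)$ where $A$ is an abelian group and $\le$ is a partial order on $A$ such that for all $a,b,c\in A$: $(\ast)$ if $b\le a$ and $c\le a$ then $b+c\le a$; $(\ast\ast)$ if $a\le b$ and $a\le c$ then $a\le a+b+c$. Every element satisfies $a+a=0$. An atom is a nonzero $a$ whose tail $\{x:x\le a\}$ equals $\{0,a\}$. The Möbius function is determined by $\mu(a,a)=1$, $\mu(a,b)=0$ if $a\not\le b$, and $\sum_{a\le c\le b}\mu(a,c)=0$ if $a\le b$, $a\neq b$. *)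

theory Defs
  imports Main
begin

definition additive_poset :: "('a::ab_group_add \<Rightarrow> 'a \<Rightarrow> bool) \<Rightarrow> bool" where
  "additive_poset le \<longleftrightarrow>
     (\<forall>a. le a a) \<and>
     (\<forall>a b c. le a b \<longrightarrow> le b c \<longrightarrow> le a c) \<and>
     (\<forall>a b. le a b \<longrightarrow> le b a \<longrightarrow> a = b) \<and>
     (\<forall>a b c. le b a \<longrightarrow> le c a \<longrightarrow> le (b + c) a) \<and>
     (\<forall>a b c. le a b \<longrightarrow> le a c \<longrightarrow> le a (a + b + c))"

definition atom :: "('a::ab_group_add \<Rightarrow> 'a \<Rightarrow> bool) \<Rightarrow> 'a \<Rightarrow> bool" where
  "atom le a \<longleftrightarrow> a \<noteq> 0 \<and> {x. le x a} = {0, a}"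

text \<open>The defining equations of the Moebius function of the order \<open>le\<close>
  (they determine it uniquely on a finite poset).\<close>
definition is_moebius :: "('a \<Rightarrow> 'a \<Rightarrow> bool) \<Rightarrow> ('a \<Rightarrow> 'a \<Rightarrow> int) \<Rightarrow> bool" where
  "is_moebius le mu \<longleftrightarrow>
     (\<forall>a. mu a a = 1) \<and>
     (\<forall>a b. \<not> le a b \<longrightarrow> mu a b = 0) \<and>
     (\<forall>a b. le a b \<and> a \<noteq> b \<longrightarrow> (\<Sum>c\<in>{c. le a c \<and> le c b}. mu a c) = 0)"

definition int_smul :: "int \<Rightarrow> 'a::ab_group_add \<Rightarrow> 'a" where
  "int_smul k x = (if 0 \<le> k then (\<Sum>i<nat k. x) else - (\<Sum>i<nat (- k). x))"

end

theory Submission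
  imports Defs
begin

text \<open>The axioms force \<open>a + a = 0\<close>, so \<open>A\<close> is a vector space over \<open>\<int>/2\<close> and only the parity of the
Moebius values matters. Both sides of the claimed identity have the same sums over every tail
\<open>{c. c \<le> a}\<close>, namely \<open>a\<close> if \<open>a\<close> is an atom and \<open>0\<close> otherwise: for the right-hand side this is
Moebius inversion, for the identity it holds because axiom (*) makes the tail of \<open>a\<close> closed under
translation by any of its elements, so its elements pair off. Since finite tails determine a
function from its tail sums, the two sides agree.\<close>

lemma sum_const_lessThan_add_self:
  fixes x :: "'a::ab_group_add" and n :: nat
  assumes "x + x = 0"
  shows "(\<Sum>i<n. x) = (if even n then 0 else x)"
  using assms by (induction n) (auto simp: add.commute)

lemma int_smul_add_self:
  fixes x :: "'a::ab_group_add"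
  assumes "x + x = 0"
  shows "int_smul k x = (if even k then 0 else x)"
proof -
  have "- x = x" using assms by (metis add_eq_0_iff)
  then show ?thesis
    by (cases "0 \<le> k") (simp_all add: int_smul_def sum_const_lessThan_add_self[OF assms] even_nat_iff)
qed

lemma int_smul_sum_add_self:
  fixes x :: "'a::ab_group_add"
  assumes "x + x = 0" and "finite C"
  shows "int_smul (\<Sum>c\<in>C. f c) x = (\<Sum>c\<in>C. int_smul (f c) x)"
  using assms(2) by induction (auto simp: int_smul_add_self[OF assms(1)] assms(1))

lemma sum_translation_closed:
  fixes x :: "'a::ab_group_add"
  assumes add_self: "\<And>z::'a. z + z = 0" and "x \<noteq> 0"
    and "finite S" and "\<And>t. t \<in> S \<Longrightarrow> t + x \<in> S"
  shows "(\<Sum>t\<in>S. t) = (if even (card S div 2) then 0 else x)"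
  using assms(3,4)
proof (induction "card S" arbitrary: S rule: less_induct)
  case less
  show ?case
  proof (cases "S = {}")
    case False
    then obtain t where t: "t \<in> S" by blast
    have tx: "t + x \<in> S" using less t by blast
    have ne: "t + x \<noteq> t" using \<open>x \<noteq> 0\<close> by simp
    define S' where "S' = S - {t, t + x}"
    have translate_back: "u + x = v \<longleftrightarrow> u = v + x" for u v
      using add_self[of x] by (metis add.assoc add.right_neutral)
    have closed': "u + x \<in> S'" if "u \<in> S'" for u
      using that less(3) translate_back unfolding S'_def by auto
    have pair: "{t, t + x} \<subseteq> S" "card {t, t + x} = 2" using t tx ne by auto
    have card_S: "card S = card S' + 2"
      using card_Diff_subset[OF _ pair(1)] card_mono[OF less(2) pair(1)] pair(2)
      unfolding S'_def by simp
    have "(\<Sum>t\<in>S. t) = (\<Sum>t\<in>{t, t + x}. t) + (\<Sum>t\<in>S'. t)"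
      unfolding S'_def using t tx less(2) sum.subset_diff[of "{t, t + x}" S "\<lambda>t. t"]
      by (simp add: add.commute)
    also have "(\<Sum>t\<in>{t, t + x}. t) = x"
      using ne add_self by (simp add: add.assoc[symmetric])
    also have "(\<Sum>t\<in>S'. t) = (if even (card S' div 2) then 0 else x)"
      using card_S less(2) by (intro less(1) closed') (simp_all add: S'_def)
    finally show ?thesis using card_S add_self by auto
  qed simp
qed

lemma additive_posetD:
  fixes le :: "'a::ab_group_add \<Rightarrow> 'a \<Rightarrow> bool"
  assumes "additive_poset le"
  shows additive_poset_refl: "le a a"
    and additive_poset_trans: "le a b \<Longrightarrow> le b c \<Longrightarrow> le a c"
    and additive_poset_antisym: "le a b \<Longrightarrow> le b a \<Longrightarrow> a = b"
    and additive_poset_add_le: "le b a \<Longrightarrow> le c a \<Longrightarrow> le (b + c) a"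
    and additive_poset_le_add: "le a b \<Longrightarrow> le a c \<Longrightarrow> le a (a + b + c)"
  using assms unfolding additive_poset_def by blast+

lemma additive_poset_add_self:
  fixes le :: "'a::ab_group_add \<Rightarrow> 'a \<Rightarrow> bool" and x :: 'a
  assumes "additive_poset le"
  shows "x + x = 0"
proof -
  have "le (x + x + x) x"
    using additive_poset_refl[OF assms] additive_poset_add_le[OF assms] by blast
  moreover have "le x (x + x + x)"
    using additive_poset_refl[OF assms] additive_poset_le_add[OF assms] by blast
  ultimately have "x + x + x = x" using additive_poset_antisym[OF assms] by blast
  then show ?thesis by (metis add_cancel_right_left add.assoc)
qed

lemma additive_poset_zero_le:
  assumes "additive_poset le"
  shows "le 0 a"
  using additive_poset_refl[OF assms] additive_poset_add_le[OF assms] additive_poset_add_self[OF assms]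
  by metis

lemma additive_poset_sum_tail:
  assumes poset: "additive_poset le" and fin: "finite {c. le c a}"
  shows "(\<Sum>c\<in>{c. le c a}. c) = (if atom le a then a else 0)"
proof -
  note add_le = additive_poset_add_le[OF poset] and add_self = additive_poset_add_self[OF poset]
  have zero_le: "le 0 x" for x using additive_poset_zero_le[OF poset] .
  show ?thesis
  proof (cases "a = 0")
    case True
    then have "{c. le c a} = {0}" using additive_poset_antisym[OF poset] zero_le by blast
    then show ?thesis using True by (simp add: atom_def)
  next
    case a0: False
    show ?thesis
    proof (cases "atom le a")
      case True
      then show ?thesis unfolding atom_def by simp
    next
      case False
      then obtain y where y: "le y a" "y \<noteq> 0" "y \<noteq> a"
        using a0 zero_le additive_poset_refl[OF poset] unfolding atom_def by blast
      \<comment> \<open>By (*) the tail is closed under translation by both \<open>a\<close> and \<open>y\<close>; the two pairings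
        force its sum to be \<open>0\<close> or both \<open>a\<close> and \<open>y\<close>.\<close>
      have "(\<Sum>c\<in>{c. le c a}. c) = (if even (card {c. le c a} div 2) then 0 else a)"
        by (rule sum_translation_closed[OF add_self a0 fin]) (auto intro: add_le additive_poset_refl[OF poset])
      moreover have "(\<Sum>c\<in>{c. le c a}. c) = (if even (card {c. le c a} div 2) then 0 else y)"
        by (rule sum_translation_closed[OF add_self y(2) fin]) (auto intro: add_le y(1))
      ultimately show ?thesis using y False by (auto split: if_splits)
    qed
  qed
qed

lemma moebius_sum_tail:
  assumes refl: "\<And>a. le a a" and trans: "\<And>a b c. le a b \<Longrightarrow> le b c \<Longrightarrow> le a c"
    and antisym: "\<And>a b. le a b \<Longrightarrow> le b a \<Longrightarrow> a = b"
    and moebius: "is_moebius le mu" and fin: "finite {c. le c a}"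
  shows "(\<Sum>c\<in>{c. le c a}. mu b c) = (if b = a then 1 else 0)"
proof -
  have mu_diag: "mu b b = 1" and mu_zero: "\<And>c. \<not> le b c \<Longrightarrow> mu b c = 0"
    and mu_interval: "le b a \<Longrightarrow> b \<noteq> a \<Longrightarrow> (\<Sum>c\<in>{c. le b c \<and> le c a}. mu b c) = 0"
    using moebius unfolding is_moebius_def by blast+
  have "(\<Sum>c\<in>{c. le c a}. mu b c) = (\<Sum>c\<in>{c. le b c \<and> le c a}. mu b c)"
    using fin by (intro sum.mono_neutral_right) (auto intro: ccontr simp: mu_zero)
  moreover have "{c. le b c \<and> le c a} = {}" if "\<not> le b a" using that trans by blast
  moreover have "{c. le b c \<and> le c a} = {a}" if "b = a" using that antisym refl by blast
  ultimately show ?thesis using mu_interval mu_diag by (cases "le b a") auto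
qed

lemma eq_if_sum_tail_eq:
  assumes refl: "\<And>a. le a a" and trans: "\<And>a b c. le a b \<Longrightarrow> le b c \<Longrightarrow> le a c"
    and antisym: "\<And>a b. le a b \<Longrightarrow> le b a \<Longrightarrow> a = b"
    and fin: "\<And>a. finite {c. le c a}"
    and tail_sums: "\<And>a. (\<Sum>c\<in>{c. le c a}. f c) = (\<Sum>c\<in>{c. le c a}. g c :: 'b::ab_group_add)"
  shows "f a = g a"
proof (induction "card {c. le c a}" arbitrary: a rule: less_induct)
  case less
  have below: "f c = g c" if "c \<in> {c. le c a} - {a}" for c
  proof -
    have "{x. le x c} \<subset> {x. le x a}" using that trans antisym refl by blast
    then show ?thesis using less psubset_card_mono[OF fin] by blast
  qed
  have "f a + (\<Sum>c\<in>{c. le c a} - {a}. f c) = g a + (\<Sum>c\<in>{c. le c a} - {a}. g c)"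
    using tail_sums[of a] refl[of a] fin[of a] by (simp add: sum.remove)
  moreover have "(\<Sum>c\<in>{c. le c a} - {a}. f c) = (\<Sum>c\<in>{c. le c a} - {a}. g c)"
    using below by (rule sum.cong[OF HOL.refl])
  ultimately show ?case by simp
qed

theorem theorem6p1:
  fixes le :: "'a::{ab_group_add, finite} \<Rightarrow> 'a \<Rightarrow> bool"
    and mu :: "'a \<Rightarrow> 'a \<Rightarrow> int"
  assumes "additive_poset le"
    and "is_moebius le mu"
  shows "\<forall>a. a = (\<Sum>b\<in>{b. atom le b}. int_smul (mu b a) b)"
proof -
  note refl = additive_poset_refl[OF assms(1)] and trans = additive_poset_trans[OF assms(1)]
    and antisym = additive_poset_antisym[OF assms(1)]
    and add_self = additive_poset_add_self[OF assms(1)]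
  define atoms where "atoms = {b. atom le b}"
  have tail_sums: "(\<Sum>c\<in>{c. le c x}. \<Sum>b\<in>atoms. int_smul (mu b c) b) = (\<Sum>c\<in>{c. le c x}. c)"
    for x
  proof -
    have "(\<Sum>c\<in>{c. le c x}. \<Sum>b\<in>atoms. int_smul (mu b c) b)
        = (\<Sum>b\<in>atoms. int_smul (\<Sum>c\<in>{c. le c x}. mu b c) b)"
      by (subst sum.swap) (simp add: int_smul_sum_add_self[OF add_self])
    also have "\<dots> = (\<Sum>b\<in>atoms. if b = x then b else 0)"
      by (intro sum.cong)
        (auto simp: moebius_sum_tail[OF refl trans antisym assms(2)] int_smul_add_self[OF add_self])
    also have "\<dots> = (\<Sum>c\<in>{c. le c x}. c)"
      by (simp add: atoms_def additive_poset_sum_tail[OF assms(1)])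
    finally show ?thesis .
  qed
  show ?thesis
    using eq_if_sum_tail_eq[OF refl trans antisym _ tail_sums] unfolding atoms_def by simp
qed

end
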